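(* Let $X$ be a scalable monoid over a ring $R$, $S$ a coherent system of unit elements for $X$, and $T\subseteq S$ a normal submonoid of $X$. Then $X/T$ is a scalable monoid, $[t]_T=[1_X]_T$ for every $t\in T$, and $S/T=\{[s]_T\mid s\in S\}$ is a coherent system of unit elements for $X/T$.
   Context: A scalable monoid over a (unital, associative) ring $R$ is a monoid $X$ (identity $1_X$, product written $xy$) together with a map $R\times X\to X$, $(\alpha,x)\mapsto\alpha\cdot x$, such that $1\cdot x=x$, $\alpha\cdot(\beta\cdot x)=\alpha\beta\cdot x$ and $\alpha\cdot(xy)=(\alpha\cdot x)y=x(\alpha\cdot y)$. In a scalable monoid $Y$, $x\sim y$ iff $\alpha\cdot x=\beta\cdot y$ for some $\alpha,\beta\in R$. A unit element is some $u\in Y$ such that every $x\sim u$ equals $\lambda\cdot u$ for some $\lambda\in R$, and $\lambda\cdot u=\lambda'\cdot u$ implies $\lambda=\lambda'$. A set $U\subseteq Y$ is dense if for every $x\in Y$ there is $u\in U$ with $u\sim x$, and sparse if $u\sim v$ implies $u=v$ for $u,v\in U$; a coherent system of unit elements for $Y$ is a submonoid of $Y$ that is a dense and sparse set of unit elements. A submonoid $T$ of $X$ is normal if $xT=Tx$ for all $x\in X$. For such $T$, $x\sim_T y$ iff $mx=ny$ for some $m,n\in T$; this is a congruence, $[x]_T$ denotes the class of $x$, and $X/T$ is the set of classes with $[x]_T[y]_T=[xy]_T$, $\lambda\cdot[x]_T=[\lambda\cdot x]_T$, identity $[1_X]_T$. *)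

theory Defs
  imports Main
begin

record ('r, 'x) smonoid =
  carrier :: "'x set"
  mult :: "'x \<Rightarrow> 'x \<Rightarrow> 'x"
  one :: "'x"
  scale :: "'r \<Rightarrow> 'x \<Rightarrow> 'x"

definition scalable_monoid :: "('r::ring_1, 'x) smonoid \<Rightarrow> bool" where
  "scalable_monoid X \<longleftrightarrow>
     (\<forall>x\<in>carrier X. \<forall>y\<in>carrier X. mult X x y \<in> carrier X) \<and>
     one X \<in> carrier X \<and>
     (\<forall>x\<in>carrier X. \<forall>y\<in>carrier X. \<forall>z\<in>carrier X.
        mult X (mult X x y) z = mult X x (mult X y z)) \<and>
     (\<forall>x\<in>carrier X. mult X (one X) x = x \<and> mult X x (one X) = x) \<and>
     (\<forall>a. \<forall>x\<in>carrier X. scale X a x \<in> carrier X) \<and>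
     (\<forall>x\<in>carrier X. scale X 1 x = x) \<and>
     (\<forall>a b. \<forall>x\<in>carrier X. scale X a (scale X b x) = scale X (a * b) x) \<and>
     (\<forall>a. \<forall>x\<in>carrier X. \<forall>y\<in>carrier X.
        scale X a (mult X x y) = mult X (scale X a x) y \<and>
        scale X a (mult X x y) = mult X x (scale X a y))"

definition sim :: "('r::ring_1, 'x) smonoid \<Rightarrow> 'x \<Rightarrow> 'x \<Rightarrow> bool" where
  "sim Y x y \<longleftrightarrow> (\<exists>a b. scale Y a x = scale Y b y)"

definition unit_element :: "('r::ring_1, 'x) smonoid \<Rightarrow> 'x \<Rightarrow> bool" where
  "unit_element Y u \<longleftrightarrow> u \<in> carrier Y \<and>
     (\<forall>x\<in>carrier Y. sim Y x u \<longrightarrow> (\<exists>l. x = scale Y l u)) \<and>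
     (\<forall>l l'. scale Y l u = scale Y l' u \<longrightarrow> l = l')"

definition dense :: "('r::ring_1, 'x) smonoid \<Rightarrow> 'x set \<Rightarrow> bool" where
  "dense Y U \<longleftrightarrow> (\<forall>x\<in>carrier Y. \<exists>u\<in>U. sim Y u x)"

definition sparse :: "('r::ring_1, 'x) smonoid \<Rightarrow> 'x set \<Rightarrow> bool" where
  "sparse Y U \<longleftrightarrow> (\<forall>u\<in>U. \<forall>v\<in>U. sim Y u v \<longrightarrow> u = v)"

definition submonoid :: "('r, 'x) smonoid \<Rightarrow> 'x set \<Rightarrow> bool" where
  "submonoid Y U \<longleftrightarrow> U \<subseteq> carrier Y \<and> one Y \<in> U \<and>
     (\<forall>u\<in>U. \<forall>v\<in>U. mult Y u v \<in> U)"

definition coherent_system :: "('r::ring_1, 'x) smonoid \<Rightarrow> 'x set \<Rightarrow> bool" where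
  "coherent_system Y U \<longleftrightarrow> submonoid Y U \<and> dense Y U \<and> sparse Y U \<and>
     (\<forall>u\<in>U. unit_element Y u)"

definition normal_submonoid :: "('r, 'x) smonoid \<Rightarrow> 'x set \<Rightarrow> bool" where
  "normal_submonoid X T \<longleftrightarrow> submonoid X T \<and>
     (\<forall>x\<in>carrier X. (\<lambda>t. mult X x t) ` T = (\<lambda>t. mult X t x) ` T)"

definition simT :: "('r, 'x) smonoid \<Rightarrow> 'x set \<Rightarrow> 'x \<Rightarrow> 'x \<Rightarrow> bool" where
  "simT X T x y \<longleftrightarrow> (\<exists>m\<in>T. \<exists>n\<in>T. mult X m x = mult X n y)"

definition cls :: "('r, 'x) smonoid \<Rightarrow> 'x set \<Rightarrow> 'x \<Rightarrow> 'x set" where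
  "cls X T x = {y \<in> carrier X. simT X T x y}"

definition quot :: "('r, 'x) smonoid \<Rightarrow> 'x set \<Rightarrow> ('r, 'x set) smonoid" where
  "quot X T = \<lparr> carrier = cls X T ` carrier X,
     mult = (\<lambda>A B. cls X T (mult X (SOME a. a \<in> A) (SOME b. b \<in> B))),
     one = cls X T (one X),
     scale = (\<lambda>l A. cls X T (scale X l (SOME a. a \<in> A))) \<rparr>"

end

theory Submission
  imports Defs
begin

text \<open>Scaling commutes with multiplication, and normality lets elements of T be moved past any
  factor, so \<open>\<sim>\<^sub>T\<close> is a congruence for both operations and X/T inherits every
  axiom of a scalable monoid. Because T \<subseteq> S and S is a submonoid, a relation
  [x] \<sim> [s] in X/T lifts to m x \<sim> n s in X with m, n \<in> T and n s \<in> S; density,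
  sparseness and the unit property of S therefore descend to S/T.\<close>

locale scalable_monoid_quotient =
  fixes X :: "('r::ring_1, 'x) smonoid" and T :: "'x set"
  assumes scalable: "scalable_monoid X"
    and normal: "normal_submonoid X T"
begin

abbreviation mult_X (infixl "\<otimes>" 70) where "x \<otimes> y \<equiv> mult X x y"
abbreviation scale_X (infixr "\<odot>" 75) where "a \<odot> x \<equiv> scale X a x"

lemma mult_closed: "x \<in> carrier X \<Longrightarrow> y \<in> carrier X \<Longrightarrow> x \<otimes> y \<in> carrier X"
  using scalable unfolding scalable_monoid_def by blast

lemma one_closed: "one X \<in> carrier X"
  using scalable unfolding scalable_monoid_def by blast

lemma mult_assoc:
  "x \<in> carrier X \<Longrightarrow> y \<in> carrier X \<Longrightarrow> z \<in> carrier X \<Longrightarrow> x \<otimes> y \<otimes> z = x \<otimes> (y \<otimes> z)"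
  using scalable unfolding scalable_monoid_def by blast

lemma mult_one_left: "x \<in> carrier X \<Longrightarrow> one X \<otimes> x = x"
  using scalable unfolding scalable_monoid_def by blast

lemma mult_one_right: "x \<in> carrier X \<Longrightarrow> x \<otimes> one X = x"
  using scalable unfolding scalable_monoid_def by blast

lemma scale_closed: "x \<in> carrier X \<Longrightarrow> a \<odot> x \<in> carrier X"
  using scalable unfolding scalable_monoid_def by blast

lemma scale_one: "x \<in> carrier X \<Longrightarrow> 1 \<odot> x = x"
  using scalable unfolding scalable_monoid_def by blast

lemma scale_scale: "x \<in> carrier X \<Longrightarrow> a \<odot> b \<odot> x = (a * b) \<odot> x"
  using scalable unfolding scalable_monoid_def by blast

lemma scale_mult_left: "x \<in> carrier X \<Longrightarrow> y \<in> carrier X \<Longrightarrow> a \<odot> (x \<otimes> y) = (a \<odot> x) \<otimes> y"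
  using scalable unfolding scalable_monoid_def by blast

lemma scale_mult_right: "x \<in> carrier X \<Longrightarrow> y \<in> carrier X \<Longrightarrow> a \<odot> (x \<otimes> y) = x \<otimes> (a \<odot> y)"
  using scalable unfolding scalable_monoid_def by blast

lemma scale_mult_commute: "x \<in> carrier X \<Longrightarrow> y \<in> carrier X \<Longrightarrow> (a \<odot> x) \<otimes> y = x \<otimes> (a \<odot> y)"
  using scale_mult_left scale_mult_right by metis

lemma T_subset_carrier: "T \<subseteq> carrier X"
  using normal unfolding normal_submonoid_def submonoid_def by blast

lemma one_in_T: "one X \<in> T"
  using normal unfolding normal_submonoid_def submonoid_def by blast

lemma mult_in_T: "m \<in> T \<Longrightarrow> n \<in> T \<Longrightarrow> m \<otimes> n \<in> T"
  using normal unfolding normal_submonoid_def submonoid_def by blast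

lemma normal_commute:
  assumes "x \<in> carrier X" and "t \<in> T"
  obtains p where "p \<in> T" and "x \<otimes> t = p \<otimes> x"
proof -
  have "x \<otimes> t \<in> (\<lambda>t. t \<otimes> x) ` T"
    using normal assms unfolding normal_submonoid_def by blast
  then show ?thesis using that by blast
qed

lemma simT_refl: "simT X T x x"
  unfolding simT_def using one_in_T by blast

lemma simT_sym: "simT X T x y \<Longrightarrow> simT X T y x"
  unfolding simT_def by metis

lemma simT_trans:
  assumes x: "x \<in> carrier X" and y: "y \<in> carrier X" and z: "z \<in> carrier X"
    and "simT X T x y" and "simT X T y z"
  shows "simT X T x z"
proof -
  obtain m n where mn: "m \<in> T" "n \<in> T" "m \<otimes> x = n \<otimes> y"
    using \<open>simT X T x y\<close> unfolding simT_def by blast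
  obtain m' n' where mn': "m' \<in> T" "n' \<in> T" "m' \<otimes> y = n' \<otimes> z"
    using \<open>simT X T y z\<close> unfolding simT_def by blast
  obtain p where p: "p \<in> T" "m' \<otimes> n = p \<otimes> m'"
    using normal_commute mn(2) mn'(1) T_subset_carrier by blast
  have T_carrier: "m \<in> carrier X" "n \<in> carrier X" "m' \<in> carrier X" "n' \<in> carrier X"
      "p \<in> carrier X"
    using mn mn' p T_subset_carrier by blast+
  have "m' \<otimes> m \<otimes> x = m' \<otimes> (n \<otimes> y)"
    using mn(3) T_carrier x by (simp add: mult_assoc)
  also have "\<dots> = p \<otimes> (m' \<otimes> y)"
    using p(2) T_carrier y by (metis mult_assoc)
  also have "\<dots> = p \<otimes> n' \<otimes> z"
    using mn'(3) T_carrier z by (simp add: mult_assoc)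
  finally show ?thesis
    unfolding simT_def using mn mn' p mult_in_T by blast
qed

lemma cls_eq_iff:
  assumes "x \<in> carrier X" and "y \<in> carrier X"
  shows "cls X T x = cls X T y \<longleftrightarrow> simT X T x y"
proof
  assume "cls X T x = cls X T y"
  then have "y \<in> cls X T x"
    using assms(2) simT_refl unfolding cls_def by blast
  then show "simT X T x y" unfolding cls_def by blast
next
  assume "simT X T x y"
  then show "cls X T x = cls X T y"
    unfolding cls_def using assms simT_sym simT_trans by blast
qed

lemma cls_some_representative:
  assumes "x \<in> carrier X"
  shows "(SOME a. a \<in> cls X T x) \<in> carrier X" and "cls X T (SOME a. a \<in> cls X T x) = cls X T x"
proof -
  have "x \<in> cls X T x"
    using assms simT_refl unfolding cls_def by blast
  then have some: "(SOME a. a \<in> cls X T x) \<in> cls X T x"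
    by (rule someI)
  then show "(SOME a. a \<in> cls X T x) \<in> carrier X"
    unfolding cls_def by blast
  with some show "cls X T (SOME a. a \<in> cls X T x) = cls X T x"
    using assms cls_eq_iff simT_sym unfolding cls_def by blast
qed

lemma simT_mult_left:
  assumes "x \<in> carrier X" "x' \<in> carrier X" "y \<in> carrier X" and "simT X T x x'"
  shows "simT X T (x \<otimes> y) (x' \<otimes> y)"
proof -
  obtain m n where mn: "m \<in> T" "n \<in> T" "m \<otimes> x = n \<otimes> x'"
    using assms(4) unfolding simT_def by blast
  moreover have "m \<in> carrier X" "n \<in> carrier X"
    using mn T_subset_carrier by blast+
  ultimately have "m \<otimes> (x \<otimes> y) = n \<otimes> (x' \<otimes> y)"
    using assms by (simp add: mult_assoc[symmetric])
  then show ?thesis unfolding simT_def using mn by blast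
qed

lemma simT_mult_right:
  assumes x: "x \<in> carrier X" and y: "y \<in> carrier X" "y' \<in> carrier X" and "simT X T y y'"
  shows "simT X T (x \<otimes> y) (x \<otimes> y')"
proof -
  obtain m n where mn: "m \<in> T" "n \<in> T" "m \<otimes> y = n \<otimes> y'"
    using assms(4) unfolding simT_def by blast
  obtain p where p: "p \<in> T" "x \<otimes> m = p \<otimes> x"
    using normal_commute x mn(1) by blast
  obtain q where q: "q \<in> T" "x \<otimes> n = q \<otimes> x"
    using normal_commute x mn(2) by blast
  have T_carrier: "m \<in> carrier X" "n \<in> carrier X" "p \<in> carrier X" "q \<in> carrier X"
    using mn p q T_subset_carrier by blast+
  have "p \<otimes> (x \<otimes> y) = x \<otimes> (m \<otimes> y)"
    using p(2) T_carrier x y by (metis mult_assoc)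
  also have "\<dots> = q \<otimes> (x \<otimes> y')"
    using mn(3) q(2) T_carrier x y by (metis mult_assoc)
  finally show ?thesis unfolding simT_def using p q by blast
qed

lemma cls_mult_cong:
  assumes x: "x \<in> carrier X" "x' \<in> carrier X" and y: "y \<in> carrier X" "y' \<in> carrier X"
    and "cls X T x = cls X T x'" and "cls X T y = cls X T y'"
  shows "cls X T (x \<otimes> y) = cls X T (x' \<otimes> y')"
proof -
  have "simT X T x x'" and "simT X T y y'"
    using assms(5,6) cls_eq_iff[OF x] cls_eq_iff[OF y] by blast+
  then have "simT X T (x \<otimes> y) (x' \<otimes> y)" and "simT X T (x' \<otimes> y) (x' \<otimes> y')"
    using simT_mult_left[OF x y(1)] simT_mult_right[OF x(2) y] by blast+
  then have "simT X T (x \<otimes> y) (x' \<otimes> y')"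
    using simT_trans[OF mult_closed[OF x(1) y(1)] mult_closed[OF x(2) y(1)] mult_closed[OF x(2) y(2)]]
    by blast
  then show ?thesis
    using cls_eq_iff mult_closed x y by blast
qed

lemma cls_scale_cong:
  assumes "x \<in> carrier X" "x' \<in> carrier X" and "cls X T x = cls X T x'"
  shows "cls X T (a \<odot> x) = cls X T (a \<odot> x')"
proof -
  obtain m n where mn: "m \<in> T" "n \<in> T" "m \<otimes> x = n \<otimes> x'"
    using assms(3) cls_eq_iff[OF assms(1,2)] unfolding simT_def by blast
  moreover have "m \<in> carrier X" "n \<in> carrier X"
    using mn T_subset_carrier by blast+
  ultimately have "m \<otimes> (a \<odot> x) = n \<otimes> (a \<odot> x')"
    using assms(1,2) by (metis scale_mult_right)
  then show ?thesis
    using mn assms scale_closed cls_eq_iff unfolding simT_def by blast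
qed

lemma quot_carrier: "carrier (quot X T) = cls X T ` carrier X"
  by (simp add: quot_def)

lemma quot_one: "one (quot X T) = cls X T (one X)"
  by (simp add: quot_def)

lemma quot_mult:
  assumes "x \<in> carrier X" and "y \<in> carrier X"
  shows "mult (quot X T) (cls X T x) (cls X T y) = cls X T (x \<otimes> y)"
proof -
  have "cls X T ((SOME a. a \<in> cls X T x) \<otimes> (SOME b. b \<in> cls X T y)) = cls X T (x \<otimes> y)"
    by (rule cls_mult_cong) (use cls_some_representative assms in auto)
  then show ?thesis by (simp add: quot_def)
qed

lemma quot_scale:
  assumes "x \<in> carrier X"
  shows "scale (quot X T) a (cls X T x) = cls X T (a \<odot> x)"
proof -
  have "cls X T (a \<odot> (SOME a. a \<in> cls X T x)) = cls X T (a \<odot> x)"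
    by (rule cls_scale_cong) (use cls_some_representative assms in auto)
  then show ?thesis by (simp add: quot_def)
qed

theorem scalable_monoid_quot: "scalable_monoid (quot X T)"
  unfolding scalable_monoid_def quot_carrier quot_one
  by (auto simp: quot_mult quot_scale mult_closed one_closed mult_assoc mult_one_left
      mult_one_right scale_closed scale_one scale_scale scale_mult_left scale_mult_commute)

lemma cls_eq_one:
  assumes "t \<in> T"
  shows "cls X T t = cls X T (one X)"
proof -
  have t: "t \<in> carrier X"
    using assms T_subset_carrier by blast
  then have "one X \<otimes> t = t \<otimes> one X"
    by (simp add: mult_one_left mult_one_right)
  then have "simT X T t (one X)"
    unfolding simT_def using assms one_in_T by blast
  then show ?thesis
    using cls_eq_iff t one_closed by blast
qed

lemma sim_quot_iff:
  assumes x: "x \<in> carrier X" and y: "y \<in> carrier X"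
  shows "sim (quot X T) (cls X T x) (cls X T y) \<longleftrightarrow> (\<exists>m\<in>T. \<exists>n\<in>T. sim X (m \<otimes> x) (n \<otimes> y))"
proof
  assume "sim (quot X T) (cls X T x) (cls X T y)"
  then obtain a b where "cls X T (a \<odot> x) = cls X T (b \<odot> y)"
    unfolding sim_def using quot_scale x y by auto
  then obtain m n where mn: "m \<in> T" "n \<in> T" "m \<otimes> (a \<odot> x) = n \<otimes> (b \<odot> y)"
    using cls_eq_iff scale_closed x y unfolding simT_def by blast
  moreover have "m \<in> carrier X" "n \<in> carrier X"
    using mn T_subset_carrier by blast+
  ultimately have "a \<odot> (m \<otimes> x) = b \<odot> (n \<otimes> y)"
    using x y by (simp add: scale_mult_right)
  then show "\<exists>m\<in>T. \<exists>n\<in>T. sim X (m \<otimes> x) (n \<otimes> y)"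
    unfolding sim_def using mn by blast
next
  assume "\<exists>m\<in>T. \<exists>n\<in>T. sim X (m \<otimes> x) (n \<otimes> y)"
  then obtain m n a b where mn: "m \<in> T" "n \<in> T" "a \<odot> (m \<otimes> x) = b \<odot> (n \<otimes> y)"
    unfolding sim_def by blast
  moreover have "m \<in> carrier X" "n \<in> carrier X"
    using mn T_subset_carrier by blast+
  ultimately have "m \<otimes> (a \<odot> x) = n \<otimes> (b \<odot> y)"
    using x y by (simp add: scale_mult_right)
  then have "cls X T (a \<odot> x) = cls X T (b \<odot> y)"
    using mn cls_eq_iff scale_closed x y unfolding simT_def by blast
  then have "scale (quot X T) a (cls X T x) = scale (quot X T) b (cls X T y)"
    by (simp add: quot_scale x y)
  then show "sim (quot X T) (cls X T x) (cls X T y)"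
    unfolding sim_def by blast
qed

end

locale coherent_quotient = scalable_monoid_quotient X T
  for X :: "('r::ring_1, 'x) smonoid" and T :: "'x set" +
  fixes S :: "'x set"
  assumes coherent: "coherent_system X S"
    and T_subset_S: "T \<subseteq> S"
begin

lemma S_subset_carrier: "S \<subseteq> carrier X"
  using coherent unfolding coherent_system_def submonoid_def by blast

lemma one_in_S: "one X \<in> S"
  using coherent unfolding coherent_system_def submonoid_def by blast

lemma mult_in_S: "s \<in> S \<Longrightarrow> s' \<in> S \<Longrightarrow> s \<otimes> s' \<in> S"
  using coherent unfolding coherent_system_def submonoid_def by blast

lemma dense_S: "x \<in> carrier X \<Longrightarrow> \<exists>s\<in>S. sim X s x"
  using coherent unfolding coherent_system_def dense_def by blast

lemma sparse_S: "s \<in> S \<Longrightarrow> s' \<in> S \<Longrightarrow> sim X s s' \<Longrightarrow> s = s'"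
  using coherent unfolding coherent_system_def sparse_def by blast

lemma unit_element_S: "s \<in> S \<Longrightarrow> unit_element X s"
  using coherent unfolding coherent_system_def by blast

lemma T_mult_in_S: "m \<in> T \<Longrightarrow> s \<in> S \<Longrightarrow> m \<otimes> s \<in> S"
  using T_subset_S mult_in_S by blast

lemma submonoid_quot: "submonoid (quot X T) (cls X T ` S)"
proof -
  have "mult (quot X T) (cls X T s) (cls X T s') \<in> cls X T ` S" if "s \<in> S" "s' \<in> S" for s s'
    using that S_subset_carrier mult_in_S by (simp add: quot_mult subsetD)
  then show ?thesis
    unfolding submonoid_def quot_carrier quot_one using S_subset_carrier one_in_S by blast
qed

lemma dense_quot: "dense (quot X T) (cls X T ` S)"
  unfolding dense_def quot_carrier
proof
  fix A assume "A \<in> cls X T ` carrier X"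
  then obtain x where x: "x \<in> carrier X" and A: "A = cls X T x"
    by blast
  obtain s where s: "s \<in> S" and "sim X s x"
    using dense_S x by blast
  moreover have s_carrier: "s \<in> carrier X"
    using s S_subset_carrier by blast
  ultimately have "sim X (one X \<otimes> s) (one X \<otimes> x)"
    using x by (simp add: mult_one_left)
  then have "sim (quot X T) (cls X T s) A"
    unfolding A using sim_quot_iff[OF s_carrier x] one_in_T by blast
  then show "\<exists>U\<in>cls X T ` S. sim (quot X T) U A"
    using s by blast
qed

lemma sparse_quot: "sparse (quot X T) (cls X T ` S)"
  unfolding sparse_def
proof (intro ballI impI)
  fix A B assume "A \<in> cls X T ` S" "B \<in> cls X T ` S" and AB: "sim (quot X T) A B"
  then obtain s s' where s: "s \<in> S" "s' \<in> S" and AB_cls: "A = cls X T s" "B = cls X T s'"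
    by blast
  have s_carrier: "s \<in> carrier X" "s' \<in> carrier X"
    using s S_subset_carrier by blast+
  obtain m n where mn: "m \<in> T" "n \<in> T" and "sim X (m \<otimes> s) (n \<otimes> s')"
    using AB sim_quot_iff[OF s_carrier] unfolding AB_cls by blast
  then have "m \<otimes> s = n \<otimes> s'"
    using sparse_S T_mult_in_S s by blast
  then show "A = B"
    unfolding AB_cls using mn cls_eq_iff[OF s_carrier] unfolding simT_def by blast
qed

lemma unit_element_quot:
  assumes s: "s \<in> S"
  shows "unit_element (quot X T) (cls X T s)"
  unfolding unit_element_def
proof (intro conjI ballI allI impI)
  have s_carrier: "s \<in> carrier X"
    using s S_subset_carrier by blast
  then show "cls X T s \<in> carrier (quot X T)"
    by (simp add: quot_carrier)
  fix A assume "A \<in> carrier (quot X T)" and A_sim: "sim (quot X T) A (cls X T s)"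
  then obtain x where x: "x \<in> carrier X" and A: "A = cls X T x"
    by (auto simp: quot_carrier)
  then obtain m n where mn: "m \<in> T" "n \<in> T" and "sim X (m \<otimes> x) (n \<otimes> s)"
    using A_sim sim_quot_iff[OF x s_carrier] by blast
  moreover have m_carrier: "m \<in> carrier X" and n_carrier: "n \<in> carrier X"
    using mn T_subset_carrier by blast+
  ultimately obtain l where "m \<otimes> x = l \<odot> (n \<otimes> s)"
    using unit_element_S[OF T_mult_in_S[OF mn(2) s]] mult_closed[OF m_carrier x]
    unfolding unit_element_def by blast
  then have "m \<otimes> x = n \<otimes> (l \<odot> s)"
    using scale_mult_right[OF n_carrier s_carrier] by simp
  then have "cls X T x = cls X T (l \<odot> s)"
    using mn cls_eq_iff[OF x scale_closed[OF s_carrier]] unfolding simT_def by blast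
  then show "\<exists>l. A = scale (quot X T) l (cls X T s)"
    unfolding A using quot_scale[OF s_carrier] by auto
next
  have s_carrier: "s \<in> carrier X"
    using s S_subset_carrier by blast
  fix l l' assume "scale (quot X T) l (cls X T s) = scale (quot X T) l' (cls X T s)"
  then have "cls X T (l \<odot> s) = cls X T (l' \<odot> s)"
    by (simp add: quot_scale s_carrier)
  then obtain m n where mn: "m \<in> T" "n \<in> T" "m \<otimes> (l \<odot> s) = n \<otimes> (l' \<odot> s)"
    using cls_eq_iff[OF scale_closed[OF s_carrier] scale_closed[OF s_carrier]]
    unfolding simT_def by blast
  moreover have "m \<in> carrier X" "n \<in> carrier X"
    using mn T_subset_carrier by blast+
  ultimately have ll': "l \<odot> (m \<otimes> s) = l' \<odot> (n \<otimes> s)"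
    using s_carrier by (simp add: scale_mult_right)
  then have "m \<otimes> s = n \<otimes> s"
    using sparse_S T_mult_in_S mn s unfolding sim_def by blast
  with ll' show "l = l'"
    using unit_element_S[OF T_mult_in_S[OF mn(1) s]] unfolding unit_element_def by simp
qed

theorem coherent_system_quot: "coherent_system (quot X T) (cls X T ` S)"
  unfolding coherent_system_def
  using submonoid_quot dense_quot sparse_quot unit_element_quot by blast

end

theorem propositionA1:
  fixes X :: "('r::ring_1, 'x) smonoid" and S T :: "'x set"
  assumes "scalable_monoid X"
    and "coherent_system X S"
    and "T \<subseteq> S"
    and "normal_submonoid X T"
  shows "scalable_monoid (quot X T)
    \<and> (\<forall>t\<in>T. cls X T t = cls X T (one X))
    \<and> coherent_system (quot X T) (cls X T ` S)"
proof -
  interpret coherent_quotient X T S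
    using assms by unfold_locales
  show ?thesis
    using scalable_monoid_quot cls_eq_one coherent_system_quot by blast
qed

end
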